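(* Let $\Pi$ be a set of $n$ processes and let $(\mathcal{G}^r)_{r\ge 1}$ be a sequence of communication graphs on $\Pi$. Let $r_1<r_2<\dots<r_n$ be $n$ distinct rounds such that each of $\mathcal{G}^{r_1},\dots,\mathcal{G}^{r_n}$ is rooted (the root components $\operatorname{Root}(\mathcal{G}^{r_i})$ need not coincide), and let $G=\{\mathcal{G}^{r_1},\dots,\mathcal{G}^{r_n}\}$. Let $X\subseteq\Pi$ satisfy $X\cap\operatorname{Root}(\mathcal{G}^{r_i})\neq\emptyset$ for every $i\in\{1,\dots,n\}$. Then for every $p\in\Pi$ there exist $q\in X$ and $i\in\{1,\dots,n\}$ such that $q\in\operatorname{Root}(\mathcal{G}^{r_i})$ and $q\in \mathrm{CP}_p(r_i,r_n)$.
   Context: A communication graph on the process set $\Pi$ is a directed graph with vertex set $\Pi$ containing every self-loop $(p\to p)$. A root component of a graph $\mathcal{G}$ is a nonempty set $R\subseteq\Pi$ that is the vertex set of a strongly connected component of $\mathcal{G}$ such that whenever $(p\to q)\in\mathcal{G}$ with $q\in R$, also $p\in R$. A graph is rooted if it has exactly one root component, denoted $\operatorname{Root}(\mathcal{G})$. For two graphs $\mathcal{G},\mathcal{G}'$ on the same vertex set $V$, the compound graph $\mathcal{G}\circ\mathcal{G}'$ has edge $(p,q)$ iff there is $p'\in V$ with $(p,p')\in\mathcal{G}$ and $(p',q)\in\mathcal{G}'$. For rounds $a\le b$, the causal past of $p$ is $\mathrm{CP}_p(a,b)=\{p\}$ if $a=b$, and $\mathrm{CP}_p(a,b)=\{q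 : (q,p)\in \mathcal{G}^{a+1}\circ\cdots\circ\mathcal{G}^{b}\}$ if $a<b$. *)

theory Defs
  imports Main
begin

definition comm_graph :: "'a set \<Rightarrow> ('a \<times> 'a) set \<Rightarrow> bool" where
  "comm_graph P E \<longleftrightarrow> E \<subseteq> P \<times> P \<and> (\<forall>p\<in>P. (p, p) \<in> E)"

definition is_scc :: "'a set \<Rightarrow> ('a \<times> 'a) set \<Rightarrow> 'a set \<Rightarrow> bool" where
  "is_scc P E R \<longleftrightarrow> R \<noteq> {} \<and> R \<subseteq> P \<and>
     (\<forall>u\<in>R. \<forall>v\<in>P. v \<in> R \<longleftrightarrow> ((u, v) \<in> E\<^sup>* \<and> (v, u) \<in> E\<^sup>*))"

definition root_component :: "'a set \<Rightarrow> ('a \<times> 'a) set \<Rightarrow> 'a set \<Rightarrow> bool" where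
  "root_component P E R \<longleftrightarrow> is_scc P E R \<and> (\<forall>p q. (p, q) \<in> E \<and> q \<in> R \<longrightarrow> p \<in> R)"

definition rooted :: "'a set \<Rightarrow> ('a \<times> 'a) set \<Rightarrow> bool" where
  "rooted P E \<longleftrightarrow> (\<exists>!R. root_component P E R)"

definition Root :: "'a set \<Rightarrow> ('a \<times> 'a) set \<Rightarrow> 'a set" where
  "Root P E = (THE R. root_component P E R)"

text \<open>compound Gs a k = G^(a+1) o ... o G^(a+k)  (identity for k = 0).\<close>
fun compound :: "(nat \<Rightarrow> ('a \<times> 'a) set) \<Rightarrow> nat \<Rightarrow> nat \<Rightarrow> ('a \<times> 'a) set" where
  "compound Gs a 0 = Id"
| "compound Gs a (Suc k) = compound Gs a k O Gs (a + Suc k)"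

definition CP :: "(nat \<Rightarrow> ('a \<times> 'a) set) \<Rightarrow> 'a \<Rightarrow> nat \<Rightarrow> nat \<Rightarrow> 'a set" where
  "CP Gs p a b = (if a = b then {p} else {q. (q, p) \<in> compound Gs a (b - a)})"

end

theory Submission
  imports Defs
begin

(* Write D_i for the causal past CP_p(r_i, r_n). In a rooted graph every nonempty set of
   processes that is closed under incoming edges contains the root component. So if
   Root(G^(r_(i+1))) is not contained in D_(i+1), some edge of G^(r_(i+1)) enters D_(i+1) from
   outside, and its source lies in D_i: the inclusion D_(i+1) \<subseteq> D_i is strict. If no root
   were contained in the corresponding causal past, the chain {p} \<subseteq> D_n \<subset> ... \<subset> D_1 would
   force D_1 to have n elements, i.e. D_1 = \<Pi> \<supseteq> Root(G^(r_1)), a contradiction. Some root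
   therefore lies entirely in the causal past of p, and X meets it. *)

lemma Root_root_component:
  assumes "rooted P E"
  shows "root_component P E (Root P E)"
  using assms unfolding rooted_def Root_def by (rule theI')

lemma Root_eq:
  assumes "rooted P E" and "root_component P E R"
  shows "Root P E = R"
  using assms unfolding rooted_def Root_def by (metis the1_equality)

lemma Root_subset: "rooted P E \<Longrightarrow> Root P E \<subseteq> P"
  using Root_root_component by (fastforce simp: root_component_def is_scc_def)

lemma ancestors_subset:
  assumes "E \<subseteq> P \<times> P" and "x \<in> P"
  shows "{w. (w, x) \<in> E\<^sup>*} \<subseteq> P"
  using assms by (auto elim: converse_rtranclE)

(* An ancestor y of x whose ancestor set is as small as possible: all ancestors of y
   have the same ancestor set, which is therefore a root component. *)
lemma ancestors_contain_root_component:
  assumes "finite P" and "E \<subseteq> P \<times> P" and "x \<in> P"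
  obtains R where "root_component P E R" and "R \<subseteq> {w. (w, x) \<in> E\<^sup>*}"
proof -
  define A where "A z = {w. (w, z) \<in> E\<^sup>*}" for z
  have "x \<in> A x" by (simp add: A_def)
  then obtain y where yx: "y \<in> A x" and least: "\<And>z. z \<in> A x \<Longrightarrow> card (A y) \<le> card (A z)"
    using ex_has_least_nat[of "\<lambda>z. z \<in> A x" x "\<lambda>z. card (A z)"] by blast
  have "y \<in> P"
    using yx ancestors_subset[OF assms(2,3)] by (auto simp: A_def)
  then have finite_Ay: "finite (A y)"
    using ancestors_subset[OF assms(2)] assms(1) finite_subset unfolding A_def by blast
  have same: "A z = A y" if "z \<in> A y" for z
  proof -
    have "A z \<subseteq> A y" using that by (auto simp: A_def)
    moreover have "z \<in> A x" using that yx by (auto simp: A_def)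
    ultimately show ?thesis using least finite_Ay card_seteq by blast
  qed
  have "root_component P E (A y)"
    unfolding root_component_def is_scc_def
  proof (intro conjI ballI allI impI)
    show "A y \<noteq> {}" by (auto simp: A_def)
    show "A y \<subseteq> P" using ancestors_subset[OF assms(2) \<open>y \<in> P\<close>] by (simp add: A_def)
  next
    fix u v assume u: "u \<in> A y"
    show "v \<in> A y \<longleftrightarrow> (u, v) \<in> E\<^sup>* \<and> (v, u) \<in> E\<^sup>*"
    proof
      assume v: "v \<in> A y"
      have "u \<in> A v" using same[OF v] u by simp
      moreover have "v \<in> A u" using same[OF u] v by simp
      ultimately show "(u, v) \<in> E\<^sup>* \<and> (v, u) \<in> E\<^sup>*" by (simp add: A_def)
    next
      assume "(u, v) \<in> E\<^sup>* \<and> (v, u) \<in> E\<^sup>*"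
      then have "v \<in> A u" by (simp add: A_def)
      then show "v \<in> A y" using same[OF u] by simp
    qed
  next
    fix a b assume "(a, b) \<in> E \<and> b \<in> A y"
    then show "a \<in> A y" by (auto simp: A_def intro: converse_rtrancl_into_rtrancl)
  qed
  moreover have "A y \<subseteq> A x" using yx by (auto simp: A_def)
  ultimately show thesis using that by (simp add: A_def)
qed

lemma Root_subset_in_closed:
  assumes "finite P" and "E \<subseteq> P \<times> P" and "rooted P E"
    and "S \<subseteq> P" and "S \<noteq> {}"
    and closed: "\<forall>a b. (a, b) \<in> E \<and> b \<in> S \<longrightarrow> a \<in> S"
  shows "Root P E \<subseteq> S"
proof -
  obtain x where "x \<in> S" using assms(5) by blast
  then have "x \<in> P" using assms(4) by blast
  obtain R where R: "root_component P E R" "R \<subseteq> {w. (w, x) \<in> E\<^sup>*}"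
    by (rule ancestors_contain_root_component[OF assms(1,2) \<open>x \<in> P\<close>])
  have "{w. (w, x) \<in> E\<^sup>*} \<subseteq> S"
  proof
    fix w assume "w \<in> {w. (w, x) \<in> E\<^sup>*}"
    then have "(w, x) \<in> E\<^sup>*" by simp
    then show "w \<in> S"
      using \<open>x \<in> S\<close> closed by (induction rule: converse_rtrancl_induct) auto
  qed
  then show ?thesis using R Root_eq[OF assms(3)] by blast
qed

lemma compound_add: "compound Gs a (k + m) = compound Gs a k O compound Gs (a + k) m"
  by (induction m) (auto simp: add.assoc)

lemma compound_split:
  assumes "a \<le> a'" and "a' \<le> b"
  shows "compound Gs a (b - a) = compound Gs a (a' - a) O compound Gs a' (b - a')"
  using compound_add[of Gs a "a' - a" "b - a'"] assms by simp

lemma CP_eq: "CP Gs p a b = {q. (q, p) \<in> compound Gs a (b - a)}"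
  by (auto simp: CP_def)

context
  fixes P :: "'a set" and Gs :: "nat \<Rightarrow> ('a \<times> 'a) set"
  assumes graphs: "\<forall>k\<ge>1. comm_graph P (Gs k)"
begin

lemma Gs_subset: "1 \<le> k \<Longrightarrow> Gs k \<subseteq> P \<times> P"
  using graphs by (simp add: comm_graph_def)

lemma compound_in_carrier: "(q, p) \<in> compound Gs a k \<Longrightarrow> p \<in> P \<Longrightarrow> q \<in> P"
proof (induction k arbitrary: p)
  case (Suc k)
  then obtain z where "(q, z) \<in> compound Gs a k" and "(z, p) \<in> Gs (a + Suc k)" by auto
  then show ?case using Suc.IH Gs_subset[of "a + Suc k"] by auto
qed simp

lemma compound_refl: "q \<in> P \<Longrightarrow> (q, q) \<in> compound Gs a k"
proof (induction k)
  case (Suc k)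
  then have "(q, q) \<in> Gs (a + Suc k)" using graphs by (simp add: comm_graph_def)
  then show ?case using Suc by auto
qed simp

lemma Gs_subset_compound:
  assumes "a < a'"
  shows "Gs a' \<subseteq> compound Gs a (a' - a)"
proof (rule subrelI)
  fix x y assume xy: "(x, y) \<in> Gs a'"
  obtain k where k: "a' - a = Suc k" using assms by (cases "a' - a") auto
  have "x \<in> P" using xy Gs_subset[of a'] assms by auto
  then have "(x, x) \<in> compound Gs a k" by (rule compound_refl)
  moreover have "a + Suc k = a'" using k assms by simp
  ultimately have "(x, y) \<in> compound Gs a k O Gs (a + Suc k)" using xy by auto
  then show "(x, y) \<in> compound Gs a (a' - a)" using k by simp
qed

lemma CP_subset: "p \<in> P \<Longrightarrow> CP Gs p a b \<subseteq> P"
  using compound_in_carrier by (auto simp: CP_eq)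

lemma self_in_CP: "p \<in> P \<Longrightarrow> p \<in> CP Gs p a b"
  using compound_refl by (simp add: CP_eq)

lemma CP_antimono:
  assumes "p \<in> P" and "a \<le> a'" and "a' \<le> b"
  shows "CP Gs p a' b \<subseteq> CP Gs p a b"
proof
  fix q assume q: "q \<in> CP Gs p a' b"
  then have "(q, q) \<in> compound Gs a (a' - a)" using CP_subset[OF assms(1)] compound_refl by blast
  then show "q \<in> CP Gs p a b" using q compound_split[OF assms(2,3)] by (auto simp: CP_eq)
qed

lemma CP_in_edge:
  assumes "a < a'" and "a' \<le> b" and "(x, y) \<in> Gs a'" and "y \<in> CP Gs p a' b"
  shows "x \<in> CP Gs p a b"
  using assms Gs_subset_compound[OF assms(1)] compound_split[of a a' b] by (auto simp: CP_eq)

lemma CP_psubset: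
  assumes "finite P" and "p \<in> P" and "a < a'" and "a' \<le> b"
    and "rooted P (Gs a')" and "\<not> Root P (Gs a') \<subseteq> CP Gs p a' b"
  shows "CP Gs p a' b \<subset> CP Gs p a b"
proof -
  have "Gs a' \<subseteq> P \<times> P" using Gs_subset assms(3) by simp
  moreover have "CP Gs p a' b \<noteq> {}" using self_in_CP[OF assms(2)] by blast
  ultimately have "\<not> (\<forall>x y. (x, y) \<in> Gs a' \<and> y \<in> CP Gs p a' b \<longrightarrow> x \<in> CP Gs p a' b)"
    using Root_subset_in_closed[OF assms(1) _ assms(5) CP_subset[OF assms(2)]] assms(6) by blast
  then obtain x y where "(x, y) \<in> Gs a'" "y \<in> CP Gs p a' b" "x \<notin> CP Gs p a' b" by blast
  moreover have "CP Gs p a' b \<subseteq> CP Gs p a b" using CP_antimono assms(2-4) by simp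
  ultimately show ?thesis using CP_in_edge assms(3,4) by blast
qed

lemma card_CP_lower_bound:
  assumes "finite P" and "p \<in> P" and "strict_mono_on {i..n} r" and "i \<le> n"
    and escape: "\<forall>j\<in>{i<..n}. rooted P (Gs (r j)) \<and> \<not> Root P (Gs (r j)) \<subseteq> CP Gs p (r j) (r n)"
  shows "n - i < card (CP Gs p (r i) (r n))"
  using assms(4)
proof (induction rule: inc_induct)
  case base
  have "finite (CP Gs p (r n) (r n))" using CP_subset[OF assms(2)] assms(1) by (rule finite_subset)
  then show ?case using self_in_CP[OF assms(2)] by (auto simp: card_gt_0_iff)
next
  case (step j)
  have "r j < r (Suc j)" and "r (Suc j) \<le> r n"
    using step.hyps assms(3) by (auto intro: strict_mono_onD strict_mono_on_leD)
  then have "CP Gs p (r (Suc j)) (r n) \<subset> CP Gs p (r j) (r n)"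
    using CP_psubset assms(1,2) escape step.hyps by auto
  then have "card (CP Gs p (r (Suc j)) (r n)) < card (CP Gs p (r j) (r n))"
    using CP_subset[OF assms(2)] assms(1) by (meson finite_subset psubset_card_mono)
  then show ?case using step.IH step.hyps by linarith
qed

lemma Root_subset_CP:
  assumes "finite P" and "card P = n" and "strict_mono_on {1..n} r"
    and "\<forall>i\<in>{1..n}. rooted P (Gs (r i))" and "p \<in> P"
  shows "\<exists>i\<in>{1..n}. Root P (Gs (r i)) \<subseteq> CP Gs p (r i) (r n)"
proof (rule ccontr)
  assume none: "\<not> ?thesis"
  have "1 \<le> n" using assms(1,2,5) by (cases n) auto
  then have "n - 1 < card (CP Gs p (r 1) (r n))"
    using card_CP_lower_bound[OF assms(1,5,3)] none assms(4) by auto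
  then have "card P \<le> card (CP Gs p (r 1) (r n))" using assms(2) by linarith
  then have "CP Gs p (r 1) (r n) = P" using card_seteq[OF assms(1) CP_subset[OF assms(5)]] by blast
  moreover have "rooted P (Gs (r 1))" using assms(4) \<open>1 \<le> n\<close> by simp
  then have "Root P (Gs (r 1)) \<subseteq> P" by (rule Root_subset)
  ultimately show False using none \<open>1 \<le> n\<close> by auto
qed

end

theorem lemma1:
  fixes P :: "'a set" and n :: nat and Gs :: "nat \<Rightarrow> ('a \<times> 'a) set"
    and r :: "nat \<Rightarrow> nat" and X :: "'a set"
  assumes "finite P" and "card P = n"
    and "\<forall>k\<ge>1. comm_graph P (Gs k)"
    and "\<forall>i\<in>{1..n}. r i \<ge> 1"
    and "\<forall>i\<in>{1..n}. \<forall>j\<in>{1..n}. i < j \<longrightarrow> r i < r j"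
    and "\<forall>i\<in>{1..n}. rooted P (Gs (r i))"
    and "X \<subseteq> P"
    and "\<forall>i\<in>{1..n}. X \<inter> Root P (Gs (r i)) \<noteq> {}"
  shows "\<forall>p\<in>P. \<exists>q\<in>X. \<exists>i\<in>{1..n}. q \<in> Root P (Gs (r i)) \<and> q \<in> CP Gs p (r i) (r n)"
proof
  fix p assume "p \<in> P"
  have "strict_mono_on {1..n} r" using assms(5) by (auto intro: strict_mono_onI)
  then have "\<exists>i\<in>{1..n}. Root P (Gs (r i)) \<subseteq> CP Gs p (r i) (r n)"
    using Root_subset_CP[OF assms(3,1,2) _ assms(6) \<open>p \<in> P\<close>] by blast
  then obtain i where i: "i \<in> {1..n}" and root: "Root P (Gs (r i)) \<subseteq> CP Gs p (r i) (r n)"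
    by blast
  obtain q where "q \<in> X" and "q \<in> Root P (Gs (r i))" using assms(8) i by blast
  then show "\<exists>q\<in>X. \<exists>i\<in>{1..n}. q \<in> Root P (Gs (r i)) \<and> q \<in> CP Gs p (r i) (r n)"
    using i root by blast
qed

end
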